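(* For an integer $m\ge 0$ let $\mathbf{S}_m=\{1,\dots,m\}^2$ (empty for $m=0$). Two squares $(i,j),(i',j')$ are said to be on a common diagonal if $i-j=i'-j'$ or $i+j=i'+j'$. Let $R_{\mathbf{W}}(m,k)$ be the number of $k$-element subsets of $\{(i,j)\in\mathbf{S}_m: i+j \text{ even}\}$ with no two distinct elements on a common diagonal, and let $R_{\mathbf{K}}(m,k)$ be the analogous number for $\{(i,j)\in\mathbf{S}_m: i+j\text{ odd}\}$ (i.e., nonattacking placements of $k$ bishops on the white, resp. black, squares). Let $\pi(m)=1$ if $m$ is odd and $0$ otherwise. Then, for all integers $m\ge 1$ and $k\ge 1$, $$R_{\mathbf{W}}(m,k)=R_{\mathbf{W}}(m-1,k)+(m-k+\pi(m))R_{\mathbf{W}}(m-1,k-1),$$ $$R_{\mathbf{K}}(m,k)=R_{\mathbf{K}}(m-1,k)+(m-k+1-\pi(m))R_{\mathbf{K}}(m-1,k-1),$$ with $R_{\mathbf{W}}(m,0)=R_{\mathbf{K}}(m,0)=1$ and $R_{\mathbf{W}}(0,k)=R_{\mathbf{K}}(0,k)=\delta_{k0}$; moreover, for all integers $m,k\ge 0$, $$R_{\mathbf{W}}(m,k)=\sum_{j=0}^{k}\binom{\lceil m/2\rceil}{j}\left\{ {m-j \atop m-k}\right\},\qquad R_{\mathbf{K}}(m,k)=\sum_{j=0}^{k}\binom{\lfloor m/2\rfloor}{j}\left\{ {m-j \atop m-k}\right\}.$$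
   Context: $\delta_{ij}$ is the Kronecker delta. The Stirling numbers of the second kind $\left\{ {n \atop r}\right\}$ are used in the extended sense for all integers $n,r$: for $n,r\ge 0$ they are the usual Stirling numbers of the second kind; for $n,r\le 0$, $\left\{ {n \atop r}\right\}=\left[{-r \atop -n}\right]$, the unsigned Stirling number of the first kind; and $\left\{ {n \atop r}\right\}=0$ when one of $n,r$ is positive and the other negative. (Equivalently, the unique extension satisfying $\left\{ {n \atop r}\right\}=r\left\{ {n-1 \atop r}\right\}+\left\{ {n-1 \atop r-1}\right\}$ for all integers, as in Knuth's convention.) Binomial coefficients $\binom{x}{j}$ with integer $j\ge0$ are $x(x-1)\cdots(x-j+1)/j!$. *)

theory Defs
  imports Complex_Main "HOL-Combinatorics.Stirling"
begin

text \<open>Extended Stirling numbers of the second kind on all integers (Knuth's convention).\<close>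
definition ext_Stirling :: "int \<Rightarrow> int \<Rightarrow> int" where
  "ext_Stirling n r =
     (if 0 \<le> n \<and> 0 \<le> r then int (Stirling (nat n) (nat r))
      else if n \<le> 0 \<and> r \<le> 0 then int (stirling (nat (- r)) (nat (- n)))
      else 0)"

definition board :: "nat \<Rightarrow> (nat \<times> nat) set" where
  "board m = {1..m} \<times> {1..m}"

definition common_diag :: "nat \<times> nat \<Rightarrow> nat \<times> nat \<Rightarrow> bool" where
  "common_diag p q \<longleftrightarrow>
     int (fst p) - int (snd p) = int (fst q) - int (snd q) \<or> fst p + snd p = fst q + snd q"

definition nonattacking :: "(nat \<times> nat) set \<Rightarrow> bool" where
  "nonattacking A \<longleftrightarrow> (\<forall>p\<in>A. \<forall>q\<in>A. p \<noteq> q \<longrightarrow> \<not> common_diag p q)"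

definition white :: "nat \<Rightarrow> (nat \<times> nat) set" where
  "white m = {(i, j) \<in> board m. even (i + j)}"

definition black :: "nat \<Rightarrow> (nat \<times> nat) set" where
  "black m = {(i, j) \<in> board m. odd (i + j)}"

definition RW :: "nat \<Rightarrow> nat \<Rightarrow> nat" where
  "RW m k = card {A. A \<subseteq> white m \<and> card A = k \<and> nonattacking A}"

definition RK :: "nat \<Rightarrow> nat \<Rightarrow> nat" where
  "RK m k = card {A. A \<subseteq> black m \<and> card A = k \<and> nonattacking A}"

definition parity :: "nat \<Rightarrow> int" where
  "parity m = (if odd m then 1 else 0)"

end

theory Submission
  imports Defs
begin

(* A cell is determined by its diagonal i - j and its anti-diagonal i + j, and a set of bishops
   is nonattacking iff it uses every diagonal and every anti-diagonal at most once; so bishops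
   are rooks on a board whose columns are the diagonals and whose rows are the anti-diagonals.
   Every anti-diagonal meeting a diagonal d also meets each diagonal of the same colour that
   is closer to the main diagonal, so one colour class is a Ferrers board.  Removing its
   longest column D gives r_k(X) = r_k(X - D) + (|D| - k + 1) r_(k-1)(X - D), hence the
   bishop numbers are obtained from the column heights m, m-2, m-2, m-4, m-4, ... (white)
   and m-1, m-1, m-3, m-3, ... (black).  An exchange rule for two consecutive columns turns
   this into the recurrence in m, which the Stirling sums also satisfy by the recurrences of
   Stirling and binomial numbers. *)

(* Rook numbers after appending a column of height h that meets every row of the board:
   the k-th rook goes into one of the h - (k - 1) cells of the column whose rows are free. *)
definition add_column :: "int \<Rightarrow> (nat \<Rightarrow> int) \<Rightarrow> nat \<Rightarrow> int" where
  "add_column h f k = (if k = 0 then f 0 else f k + (h - int k + 1) * f (k - 1))"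

definition delta0 :: "nat \<Rightarrow> int" where
  "delta0 k = (if k = 0 then 1 else 0)"

lemma add_column_commute:
  "add_column b (add_column a f) = add_column (a + 1) (add_column (b - 1) f)"
proof
  fix k
  show "add_column b (add_column a f) k = add_column (a + 1) (add_column (b - 1) f) k"
    by (cases k; cases "k - 1") (simp_all add: add_column_def algebra_simps)
qed

lemma add_column_0_delta0: "add_column 0 delta0 = delta0"
  by (rule ext) (simp add: add_column_def delta0_def)

definition diagonal :: "nat \<times> nat \<Rightarrow> int" where
  "diagonal p = int (fst p) - int (snd p)"

definition antidiagonal :: "nat \<times> nat \<Rightarrow> nat" where
  "antidiagonal p = fst p + snd p"

lemma diagonal_antidiagonal_eqD:
  "diagonal p = diagonal q \<Longrightarrow> antidiagonal p = antidiagonal q \<Longrightarrow> p = q"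
  by (cases p; cases q) (auto simp: diagonal_def antidiagonal_def)

lemma nonattacking_iff_inj_on:
  "nonattacking A \<longleftrightarrow> inj_on diagonal A \<and> inj_on antidiagonal A"
  unfolding nonattacking_def common_diag_def inj_on_def diagonal_def antidiagonal_def by blast

definition placements :: "(nat \<times> nat) set \<Rightarrow> nat \<Rightarrow> (nat \<times> nat) set set" where
  "placements X k = {A. A \<subseteq> X \<and> card A = k \<and> nonattacking A}"

definition bishop_numbers :: "(nat \<times> nat) set \<Rightarrow> nat \<Rightarrow> int" where
  "bishop_numbers X k = int (card (placements X k))"

lemma finite_placements: "finite X \<Longrightarrow> finite (placements X k)"
  by (rule finite_subset[of _ "Pow X"]) (auto simp: placements_def)

lemma bishop_numbers_0: "finite X \<Longrightarrow> bishop_numbers X 0 = 1"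
proof -
  assume "finite X"
  then have "placements X 0 = {{}}"
    by (auto simp: placements_def nonattacking_def finite_subset)
  then show ?thesis by (simp add: bishop_numbers_def)
qed

lemma bishop_numbers_empty: "bishop_numbers {} = delta0"
proof
  fix k
  have "placements {} k = (if k = 0 then {{}} else {})"
    by (auto simp: placements_def nonattacking_def)
  then show "bishop_numbers {} k = delta0 k"
    by (simp add: bishop_numbers_def delta0_def)
qed

lemma placements_Suc_remove_diagonal:
  assumes "finite X" and D: "D = {p \<in> X. diagonal p = c}"
  shows "placements X (Suc j) = placements (X - D) (Suc j) \<union>
    (\<lambda>(A, q). insert q A) ` (SIGMA A:placements (X - D) j. {q \<in> D. antidiagonal q \<notin> antidiagonal ` A})"
    (is "_ = ?P \<union> ?Q")
proof (intro equalityI subsetI)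
  fix B assume B: "B \<in> placements X (Suc j)"
  then have BX: "B \<subseteq> X" "card B = Suc j" and inj: "inj_on diagonal B" "inj_on antidiagonal B"
    by (auto simp: placements_def nonattacking_iff_inj_on)
  show "B \<in> ?P \<union> ?Q"
  proof (cases "B \<inter> D = {}")
    case True
    then show ?thesis using B by (auto simp: placements_def)
  next
    case False
    then obtain q where q: "q \<in> B" "q \<in> D" by blast
    have "B - {q} \<subseteq> X - D"
    proof
      fix p assume p: "p \<in> B - {q}"
      then have "diagonal p \<noteq> diagonal q"
        using inj(1) q(1) by (auto dest: inj_onD)
      then show "p \<in> X - D" using p BX(1) q(2) D by auto
    qed
    moreover have "card (B - {q}) = j"
      using BX q \<open>finite X\<close> by (simp add: finite_subset)
    moreover have "nonattacking (B - {q})"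
      using inj by (simp add: nonattacking_iff_inj_on inj_on_diff)
    moreover have "antidiagonal q \<notin> antidiagonal ` (B - {q})"
      by (subst inj_on_image_mem_iff[OF inj(2) q(1)]) auto
    ultimately have "(B - {q}, q) \<in> (SIGMA A:placements (X - D) j. {q \<in> D. antidiagonal q \<notin> antidiagonal ` A})"
      using q by (simp add: placements_def)
    then have "B \<in> ?Q"
      by (rule rev_image_eqI) (use q in auto)
    then show ?thesis ..
  qed
next
  fix B assume "B \<in> ?P \<union> ?Q"
  then show "B \<in> placements X (Suc j)"
  proof
    assume "B \<in> ?P"
    then show ?thesis by (auto simp: placements_def)
  next
    assume "B \<in> ?Q"
    then obtain A q where A: "A \<in> placements (X - D) j" and q: "q \<in> D" "antidiagonal q \<notin> antidiagonal ` A"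
      and B: "B = insert q A" by blast
    have A_props: "A \<subseteq> X - D" "card A = j" "inj_on diagonal A" "inj_on antidiagonal A"
      using A by (auto simp: placements_def nonattacking_iff_inj_on)
    then have "diagonal q \<notin> diagonal ` A" and "q \<notin> A"
      using q D by auto
    moreover have "finite A"
      using A_props(1) \<open>finite X\<close> by (meson finite_Diff finite_subset)
    moreover have "A \<subseteq> X"
      using A_props(1) by blast
    ultimately show ?thesis
      using A_props q B D by (simp add: placements_def nonattacking_iff_inj_on)
  qed
qed

lemma card_unblocked_diagonal_cells:
  assumes "finite X" and D: "D = {p \<in> X. diagonal p = c}"
    and covers: "antidiagonal ` X \<subseteq> antidiagonal ` D"
    and A: "A \<in> placements (X - D) j"
  shows "int (card {q \<in> D. antidiagonal q \<notin> antidiagonal ` A}) = int (card D) - int j"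
proof -
  have inj_D: "inj_on antidiagonal D"
    unfolding D by (intro inj_onI diagonal_antidiagonal_eqD) auto
  have "A \<subseteq> X" and inj_A: "inj_on antidiagonal A" and "card A = j"
    using A by (auto simp: placements_def nonattacking_iff_inj_on)
  then have card_A: "card (antidiagonal ` A) = j"
    by (simp add: card_image)
  have sub: "antidiagonal ` A \<subseteq> antidiagonal ` D"
    using \<open>A \<subseteq> X\<close> covers by blast
  have fin_D: "finite (antidiagonal ` D)"
    using \<open>finite X\<close> D by simp
  have card_D: "card (antidiagonal ` D) = card D"
    using inj_D by (rule card_image)
  have "inj_on antidiagonal {q \<in> D. antidiagonal q \<notin> antidiagonal ` A}"
    using inj_D by (rule inj_on_subset) auto
  then have "card {q \<in> D. antidiagonal q \<notin> antidiagonal ` A}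
      = card (antidiagonal ` {q \<in> D. antidiagonal q \<notin> antidiagonal ` A})"
    by (rule card_image[symmetric])
  also have "antidiagonal ` {q \<in> D. antidiagonal q \<notin> antidiagonal ` A}
      = antidiagonal ` D - antidiagonal ` A"
    by auto
  also have "card \<dots> = card D - j"
    using card_Diff_subset[OF finite_subset[OF sub fin_D] sub] card_A card_D by simp
  finally show ?thesis
    using card_mono[OF fin_D sub] card_A card_D by simp
qed

lemma bishop_numbers_remove_diagonal:
  assumes "finite X" and D: "D = {p \<in> X. diagonal p = c}"
    and covers: "antidiagonal ` X \<subseteq> antidiagonal ` D"
  shows "bishop_numbers X = add_column (int (card D)) (bishop_numbers (X - D))"
proof
  fix k
  show "bishop_numbers X k = add_column (int (card D)) (bishop_numbers (X - D)) k"
  proof (cases k)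
    case 0
    then show ?thesis using \<open>finite X\<close> by (simp add: add_column_def bishop_numbers_0)
  next
    case (Suc j)
    define free where "free A = {q \<in> D. antidiagonal q \<notin> antidiagonal ` A}" for A
    let ?Y = "X - D" and ?ins = "\<lambda>(A, q). insert q A"
    have fin: "finite (placements ?Y i)" for i
      using \<open>finite X\<close> by (simp add: finite_placements)
    have split_D: "?ins x - D = fst x" "?ins x \<inter> D = {snd x}"
      if "x \<in> Sigma (placements ?Y j) free" for x
      using that by (auto simp: placements_def free_def)
    have inj: "inj_on ?ins (Sigma (placements ?Y j) free)"
      by (rule inj_onI) (metis split_D prod_eqI singleton_inject)
    have disjoint: "placements ?Y (Suc j) \<inter> ?ins ` Sigma (placements ?Y j) free = {}"
      by (auto simp: placements_def free_def)
    have fin_free: "finite (free A)" for A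
      using \<open>finite X\<close> D by (simp add: free_def)
    have "card (placements X (Suc j))
        = card (placements ?Y (Suc j)) + card (?ins ` Sigma (placements ?Y j) free)"
      unfolding placements_Suc_remove_diagonal[OF \<open>finite X\<close> D, of j] free_def[symmetric]
      using disjoint fin fin_free by (intro card_Un_disjoint) auto
    also have "card (?ins ` Sigma (placements ?Y j) free) = (\<Sum>A\<in>placements ?Y j. card (free A))"
      using inj fin fin_free by (simp add: card_image)
    finally have "card (placements X (Suc j))
        = card (placements ?Y (Suc j)) + (\<Sum>A\<in>placements ?Y j. card (free A))" .
    then have "bishop_numbers X (Suc j)
        = bishop_numbers ?Y (Suc j) + (\<Sum>A\<in>placements ?Y j. int (card D) - int j)"
      using card_unblocked_diagonal_cells[OF assms] by (simp add: bishop_numbers_def free_def)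
    then show ?thesis
      using Suc by (simp add: add_column_def bishop_numbers_def algebra_simps)
  qed
qed

fun column_pairs :: "nat \<Rightarrow> nat \<Rightarrow> nat \<Rightarrow> int" where
  "column_pairs a 0 = delta0"
| "column_pairs a (Suc n) =
     add_column (int a + 2 * int n) (add_column (int a + 2 * int n) (column_pairs a n))"

lemma column_pairs_2: "column_pairs 2 t = add_column (2 * int t) (column_pairs 1 t)"
proof (induction t)
  case 0
  show ?case by (simp add: add_column_0_delta0)
next
  case (Suc t)
  have "add_column (2 * int t + 2) (add_column (2 * int t) (column_pairs 1 t))
      = add_column (2 * int t + 1) (add_column (2 * int t + 1) (column_pairs 1 t))"
    using add_column_commute[of "2 * int t + 2" "2 * int t"] by (simp add: algebra_simps)
  then show ?case using Suc by (simp add: algebra_simps)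
qed

lemma column_pairs_1_Suc: "column_pairs 1 (Suc t) = add_column (2 * int t + 2) (column_pairs 2 t)"
  using add_column_commute[of "2 * int t + 2" "2 * int t" "column_pairs 1 t"]
  by (simp add: column_pairs_2 algebra_simps)

lemma abs_diagonal_less: "p \<in> board m \<Longrightarrow> \<bar>diagonal p\<bar> < int m"
  by (cases p) (auto simp: board_def diagonal_def)

lemma card_board_diagonal_nat: "card {p \<in> board m. diagonal p = int n} = m - n"
proof -
  have "{p \<in> board m. diagonal p = int n} = (\<lambda>i. (i + n, i)) ` {1..m - n}"
    by (auto simp: board_def diagonal_def image_iff)
  moreover have "inj (\<lambda>i. (i + n, i))"
    by (rule injI) simp
  ultimately show ?thesis
    by (simp add: card_image inj_on_subset)
qed

lemma card_board_diagonal: "card {p \<in> board m. diagonal p = c} = m - nat \<bar>c\<bar>"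
proof (cases "0 \<le> c")
  case True
  then show ?thesis using card_board_diagonal_nat[of m "nat c"] by simp
next
  case False
  have "{p \<in> board m. diagonal p = c} = prod.swap ` {p \<in> board m. diagonal p = int (nat (- c))}"
    using False by (auto simp: board_def diagonal_def image_iff)
  then show ?thesis
    using card_board_diagonal_nat[of m "nat (- c)"] False by (simp add: card_image)
qed

lemma board_antidiagonal_meets_diagonal:
  assumes p: "p \<in> board m" and "\<bar>c\<bar> \<le> \<bar>diagonal p\<bar>" and "even (diagonal p - c)"
  obtains r where "r \<in> board m" "diagonal r = c" "antidiagonal r = antidiagonal p"
proof -
  obtain a b where ab: "p = (a, b)" by (cases p)
  define s where "s = int a + int b"
  have le: "\<bar>c\<bar> \<le> \<bar>int a - int b\<bar>" and ev: "even (s + c)"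
    using assms ab by (simp_all add: diagonal_def s_def)
  then obtain t where t: "s + c = 2 * t"
    by (elim evenE)
  have "1 \<le> a" "a \<le> m" "1 \<le> b" "b \<le> m"
    using p ab by (auto simp: board_def)
  then have bounds: "1 \<le> t" "t \<le> int m" "1 \<le> t - c" "t - c \<le> int m"
    using le t unfolding s_def by (auto simp: abs_if split: if_splits)
  have "(nat t, nat (t - c)) \<in> board m"
    "diagonal (nat t, nat (t - c)) = c" "antidiagonal (nat t, nat (t - c)) = antidiagonal p"
    using bounds t ab unfolding s_def by (auto simp: board_def diagonal_def antidiagonal_def)
  then show ?thesis by (rule that)
qed

definition diagonal_cells :: "nat \<Rightarrow> int set \<Rightarrow> (nat \<times> nat) set" where
  "diagonal_cells m S = {p \<in> board m. diagonal p \<in> S}"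

lemma bishop_numbers_diagonal_cells_remove:
  assumes "c \<in> S" and extremal: "\<And>d. d \<in> S \<Longrightarrow> \<bar>c\<bar> \<le> \<bar>d\<bar> \<and> even (d - c)"
  shows "bishop_numbers (diagonal_cells m S)
    = add_column (int (m - nat \<bar>c\<bar>)) (bishop_numbers (diagonal_cells m (S - {c})))"
proof -
  let ?X = "diagonal_cells m S"
  define D where "D = {p \<in> ?X. diagonal p = c}"
  have D_eq: "D = {p \<in> board m. diagonal p = c}"
    using \<open>c \<in> S\<close> by (auto simp: D_def diagonal_cells_def)
  have "antidiagonal ` ?X \<subseteq> antidiagonal ` D"
  proof
    fix s assume "s \<in> antidiagonal ` ?X"
    then obtain p where p: "p \<in> board m" "diagonal p \<in> S" "s = antidiagonal p"
      by (auto simp: diagonal_cells_def)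
    moreover have "\<bar>c\<bar> \<le> \<bar>diagonal p\<bar>" "even (diagonal p - c)"
      using extremal[OF p(2)] by auto
    ultimately obtain r where "r \<in> board m" "diagonal r = c" "antidiagonal r = s"
      by (metis board_antidiagonal_meets_diagonal)
    then show "s \<in> antidiagonal ` D"
      unfolding D_eq by blast
  qed
  moreover have "finite ?X"
    by (simp add: diagonal_cells_def board_def)
  moreover have "?X - D = diagonal_cells m (S - {c})"
    by (auto simp: D_def diagonal_cells_def)
  ultimately show ?thesis
    using bishop_numbers_remove_diagonal[OF _ D_def] D_eq card_board_diagonal by simp
qed

definition outer_diagonals :: "nat \<Rightarrow> int set" where
  "outer_diagonals e = {d. int e \<le> \<bar>d\<bar> \<and> even (d - int e)}"

lemma outer_diagonals_remove_pair:
  "1 \<le> e \<Longrightarrow> outer_diagonals e - {int e} - {- int e} = outer_diagonals (e + 2)"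
  by (auto simp: outer_diagonals_def; presburger)

(* The diagonals \<plusminus>e, \<plusminus>(e + 2), ... have lengths m - e, m - e - 2, ..., down to a. *)
lemma bishop_numbers_outer_diagonals:
  assumes "1 \<le> e" "1 \<le> a" "a \<le> 2" "m + 2 = e + a + 2 * n"
  shows "bishop_numbers (diagonal_cells m (outer_diagonals e)) = column_pairs a n"
  using assms
proof (induction n arbitrary: e)
  case 0
  then have "diagonal_cells m (outer_diagonals e) = {}"
    using abs_diagonal_less by (fastforce simp: diagonal_cells_def outer_diagonals_def)
  then show ?case by (simp add: bishop_numbers_empty)
next
  case (Suc n)
  let ?S = "outer_diagonals e"
  have h: "m - e = a + 2 * n"
    using Suc.prems by simp
  have "bishop_numbers (diagonal_cells m ?S)
      = add_column (int (m - e)) (bishop_numbers (diagonal_cells m (?S - {int e})))"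
    using bishop_numbers_diagonal_cells_remove[of "int e" ?S m]
    by (simp add: outer_diagonals_def)
  also have "bishop_numbers (diagonal_cells m (?S - {int e}))
      = add_column (int (m - e)) (bishop_numbers (diagonal_cells m (?S - {int e} - {- int e})))"
    using bishop_numbers_diagonal_cells_remove[of "- int e" "?S - {int e}" m] Suc.prems
    by (simp add: outer_diagonals_def; presburger)
  also have "?S - {int e} - {- int e} = outer_diagonals (e + 2)"
    using Suc.prems(1) by (rule outer_diagonals_remove_pair)
  also have "bishop_numbers (diagonal_cells m (outer_diagonals (e + 2))) = column_pairs a n"
    using Suc.IH Suc.prems by simp
  finally show ?case
    using h by (simp add: algebra_simps)
qed

lemma white_eq_diagonal_cells: "white m = diagonal_cells m (outer_diagonals 0)"
  by (auto simp: white_def diagonal_cells_def outer_diagonals_def diagonal_def)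

lemma black_eq_diagonal_cells: "black m = diagonal_cells m (outer_diagonals 1)"
proof -
  have "odd (i + j) \<Longrightarrow> 1 \<le> \<bar>int i - int j\<bar>" for i j :: nat
    by presburger
  then show ?thesis
    by (auto simp: black_def diagonal_cells_def outer_diagonals_def diagonal_def)
qed

lemma bishop_numbers_white:
  "bishop_numbers (white m) = add_column (int m) (bishop_numbers (diagonal_cells m (outer_diagonals 2)))"
proof -
  have "outer_diagonals 0 - {0} = outer_diagonals 2"
    by (auto simp: outer_diagonals_def; presburger)
  then show ?thesis
    using bishop_numbers_diagonal_cells_remove[of 0 "outer_diagonals 0" m]
    by (simp add: white_eq_diagonal_cells outer_diagonals_def)
qed

lemma white_0: "white 0 = {}" and black_0: "black 0 = {}"
  by (simp_all add: white_def black_def board_def)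

lemma finite_white: "finite (white m)" and finite_black: "finite (black m)"
  by (simp_all add: white_eq_diagonal_cells black_eq_diagonal_cells diagonal_cells_def board_def)

lemma bishop_numbers_white_even: "bishop_numbers (white (2 * t)) = column_pairs 1 t"
proof (cases t)
  case 0
  then show ?thesis by (simp add: white_0 bishop_numbers_empty)
next
  case (Suc s)
  have "bishop_numbers (diagonal_cells (2 * t) (outer_diagonals 2)) = column_pairs 2 s"
    using Suc by (intro bishop_numbers_outer_diagonals) simp_all
  then show ?thesis
    using Suc column_pairs_1_Suc[of s] by (simp add: bishop_numbers_white algebra_simps)
qed

lemma bishop_numbers_white_odd:
  "bishop_numbers (white (2 * t + 1)) = add_column (2 * int t + 1) (column_pairs 1 t)"
proof -
  have "bishop_numbers (diagonal_cells (2 * t + 1) (outer_diagonals 2)) = column_pairs 1 t"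
    by (intro bishop_numbers_outer_diagonals) simp_all
  then show ?thesis
    by (simp add: bishop_numbers_white algebra_simps)
qed

lemma bishop_numbers_black_even: "bishop_numbers (black (2 * t)) = column_pairs 1 t"
  unfolding black_eq_diagonal_cells by (intro bishop_numbers_outer_diagonals) simp_all

lemma bishop_numbers_black_odd: "bishop_numbers (black (2 * t + 1)) = column_pairs 2 t"
  unfolding black_eq_diagonal_cells by (intro bishop_numbers_outer_diagonals) simp_all

lemma bishop_numbers_white_Suc:
  "bishop_numbers (white (Suc m)) = add_column (int m + parity (Suc m)) (bishop_numbers (white m))"
proof (cases "even m")
  case True
  then obtain t where "m = 2 * t" by blast
  then show ?thesis
    using bishop_numbers_white_odd[of t] bishop_numbers_white_even[of t]
    by (simp add: parity_def algebra_simps)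
next
  case False
  then obtain t where "m = 2 * t + 1" by (blast elim: oddE)
  moreover have "bishop_numbers (white (2 * Suc t)) = column_pairs 1 (Suc t)"
    by (rule bishop_numbers_white_even)
  ultimately show ?thesis
    using bishop_numbers_white_odd[of t] by (simp add: parity_def algebra_simps)
qed

lemma bishop_numbers_black_Suc:
  "bishop_numbers (black (Suc m)) = add_column (int m + 1 - parity (Suc m)) (bishop_numbers (black m))"
proof (cases "even m")
  case True
  then obtain t where "m = 2 * t" by blast
  then show ?thesis
    using bishop_numbers_black_odd[of t] bishop_numbers_black_even[of t] column_pairs_2[of t]
    by (simp add: parity_def)
next
  case False
  then obtain t where "m = 2 * t + 1" by (blast elim: oddE)
  moreover have "bishop_numbers (black (2 * Suc t)) = column_pairs 1 (Suc t)"
    by (rule bishop_numbers_black_even)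
  ultimately show ?thesis
    using bishop_numbers_black_odd[of t] column_pairs_1_Suc[of t]
    by (simp add: parity_def algebra_simps)
qed

definition binomial_Stirling_sum :: "nat \<Rightarrow> nat \<Rightarrow> nat \<Rightarrow> nat" where
  "binomial_Stirling_sum c m n = (\<Sum>j\<le>c. (c choose j) * Stirling (m - j) n)"

lemma binomial_Stirling_sum_Suc_Suc:
  assumes "c \<le> m"
  shows "binomial_Stirling_sum c (Suc m) (Suc n)
    = Suc n * binomial_Stirling_sum c m (Suc n) + binomial_Stirling_sum c m n"
proof -
  have "Suc m - j = Suc (m - j)" if "j \<le> c" for j
    using that assms by simp
  then show ?thesis
    by (simp add: binomial_Stirling_sum_def sum.distrib sum_distrib_left algebra_simps)
qed

lemma binomial_Stirling_sum_Suc_0: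
  assumes "c \<le> m"
  shows "binomial_Stirling_sum c (Suc m) 0 = 0"
proof -
  have "Suc m - j = Suc (m - j)" if "j \<le> c" for j
    using that assms by simp
  then show ?thesis
    by (simp add: binomial_Stirling_sum_def)
qed

lemma binomial_Stirling_sum_Pascal:
  "binomial_Stirling_sum (Suc c) (Suc m) n
    = binomial_Stirling_sum c (Suc m) n + binomial_Stirling_sum c m n"
proof -
  have "binomial_Stirling_sum c (Suc m) n = (\<Sum>j\<le>Suc c. (c choose j) * Stirling (Suc m - j) n)"
    by (simp add: binomial_Stirling_sum_def)
  also have "\<dots> = Stirling (Suc m) n + (\<Sum>j\<le>c. (c choose Suc j) * Stirling (m - j) n)"
    by (simp only: sum.atMost_Suc_shift) simp
  finally show ?thesis
    unfolding binomial_Stirling_sum_def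
    by (simp add: sum.atMost_Suc_shift binomial_Suc_Suc sum.distrib add_mult_distrib
        del: sum.atMost_Suc)
qed

definition stirling_closed_form :: "nat \<Rightarrow> nat \<Rightarrow> nat \<Rightarrow> int" where
  "stirling_closed_form c m k =
     (\<Sum>j = 0..k. int (c choose j) * ext_Stirling (int m - int j) (int m - int k))"

lemma stirling_closed_form_eq:
  assumes "c \<le> m"
  shows "stirling_closed_form c m k =
    (if k \<le> m then int (binomial_Stirling_sum c m (m - k)) else 0)"
proof (cases "k \<le> m")
  case True
  have "stirling_closed_form c m k = int (\<Sum>j = 0..k. (c choose j) * Stirling (m - j) (m - k))"
    unfolding stirling_closed_form_def of_nat_sum
    using True by (intro sum.cong) (auto simp: ext_Stirling_def nat_diff_distrib')
  also have "(\<Sum>j = 0..k. (c choose j) * Stirling (m - j) (m - k))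
      = (\<Sum>j = 0..m. (c choose j) * Stirling (m - j) (m - k))"
    using True by (intro sum.mono_neutral_left) auto
  also have "\<dots> = binomial_Stirling_sum c m (m - k)"
    unfolding binomial_Stirling_sum_def atMost_atLeast0
    using assms by (intro sum.mono_neutral_right) auto
  finally show ?thesis using True by simp
next
  case False
  have "int (c choose j) * ext_Stirling (int m - int j) (int m - int k) = 0" for j
    using False assms by (cases "c < j"; cases "j = m") (auto simp: ext_Stirling_def)
  then have "stirling_closed_form c m k = 0"
    unfolding stirling_closed_form_def by (intro sum.neutral) blast
  then show ?thesis
    using False by simp
qed

lemma stirling_closed_form_0: "stirling_closed_form c m 0 = 1"
  by (simp add: stirling_closed_form_def ext_Stirling_def)

lemma stirling_closed_form_Suc_Suc:
  assumes "c \<le> m"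
  shows "stirling_closed_form c (Suc m) (Suc k)
    = stirling_closed_form c m (Suc k) + (int m - int k) * stirling_closed_form c m k"
proof (cases "k < m")
  case True
  then obtain n where n: "m - k = Suc n" "m - Suc k = n"
    by (metis Suc_diff_Suc)
  then have "int m - int k = 1 + int n"
    using True by linarith
  then show ?thesis
    using assms True n binomial_Stirling_sum_Suc_Suc[OF assms, of n]
    by (simp add: stirling_closed_form_eq algebra_simps)
qed (use assms binomial_Stirling_sum_Suc_0 in \<open>auto simp: stirling_closed_form_eq\<close>)

lemma stirling_closed_form_Suc_Suc_Suc:
  assumes "c \<le> m"
  shows "stirling_closed_form (Suc c) (Suc m) (Suc k)
    = stirling_closed_form c (Suc m) (Suc k) + stirling_closed_form c m k"
  using assms by (simp add: stirling_closed_form_eq binomial_Stirling_sum_Pascal)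

lemma closed_form_of_recurrence:
  fixes R :: "nat \<Rightarrow> nat \<Rightarrow> int" and c :: "nat \<Rightarrow> nat"
  assumes R_0: "\<And>m. R m 0 = 1" and R_0_Suc: "\<And>k. R 0 (Suc k) = 0"
    and R_Suc_Suc: "\<And>m k. R (Suc m) (Suc k)
      = R m (Suc k) + (int m - int k + (int (c (Suc m)) - int (c m))) * R m k"
    and c_0: "c 0 = 0" and c_Suc: "\<And>m. c (Suc m) = c m \<or> c (Suc m) = Suc (c m)"
  shows "R m k = stirling_closed_form (c m) m k"
proof -
  have c_le: "c m \<le> m" for m
  proof (induction m)
    case (Suc m)
    then show ?case using c_Suc[of m] by auto
  qed (simp add: c_0)
  show ?thesis
  proof (induction m arbitrary: k)
    case 0
    show ?case
      using R_0 R_0_Suc c_0 by (cases k) (simp_all add: stirling_closed_form_0 stirling_closed_form_eq)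
  next
    case (Suc m)
    show ?case
    proof (cases k)
      case 0
      then show ?thesis by (simp add: R_0 stirling_closed_form_0)
    next
      case (Suc k)
      from c_Suc[of m] show ?thesis
      proof
        assume "c (Suc m) = c m"
        then show ?thesis
          using Suc Suc.IH R_Suc_Suc[of m k] stirling_closed_form_Suc_Suc[OF c_le, of m k]
          by simp
      next
        assume "c (Suc m) = Suc (c m)"
        then show ?thesis
          using Suc Suc.IH R_Suc_Suc[of m k] stirling_closed_form_Suc_Suc[OF c_le, of m k]
            stirling_closed_form_Suc_Suc_Suc[OF c_le, of m k]
          by (simp add: algebra_simps)
      qed
    qed
  qed
qed

lemma RW_eq_bishop_numbers: "int (RW m k) = bishop_numbers (white m) k"
  by (simp add: RW_def bishop_numbers_def placements_def)

lemma RK_eq_bishop_numbers: "int (RK m k) = bishop_numbers (black m) k"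
  by (simp add: RK_def bishop_numbers_def placements_def)

lemma RW_Suc_Suc:
  "int (RW (Suc m) (Suc k)) = int (RW m (Suc k)) + (int m - int k + parity (Suc m)) * int (RW m k)"
  using bishop_numbers_white_Suc[of m]
  by (simp add: RW_eq_bishop_numbers add_column_def algebra_simps)

lemma RK_Suc_Suc:
  "int (RK (Suc m) (Suc k)) = int (RK m (Suc k)) + (int m - int k + 1 - parity (Suc m)) * int (RK m k)"
  using bishop_numbers_black_Suc[of m]
  by (simp add: RK_eq_bishop_numbers add_column_def algebra_simps)

lemma RW_0: "RW m 0 = 1"
  using RW_eq_bishop_numbers[of m 0] bishop_numbers_0[OF finite_white] by simp

lemma RK_0: "RK m 0 = 1"
  using RK_eq_bishop_numbers[of m 0] bishop_numbers_0[OF finite_black] by simp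

lemma RW_0_left: "RW 0 k = (if k = 0 then 1 else 0)"
  using RW_eq_bishop_numbers[of 0 k] by (cases k) (simp_all add: white_0 bishop_numbers_empty delta0_def)

lemma RK_0_left: "RK 0 k = (if k = 0 then 1 else 0)"
  using RK_eq_bishop_numbers[of 0 k] by (cases k) (simp_all add: black_0 bishop_numbers_empty delta0_def)

lemma nat_ceiling_half: "nat \<lceil>real m / 2\<rceil> = (m + 1) div 2"
proof (cases "even m")
  case True
  then show ?thesis by (auto elim!: evenE)
next
  case False
  then obtain t where t: "m = 2 * t + 1" by (blast elim: oddE)
  then have "\<lceil>real m / 2\<rceil> = int t + 1"
    by (simp add: ceiling_eq_iff)
  then show ?thesis using t by simp
qed

lemma nat_floor_half: "nat \<lfloor>real m / 2\<rfloor> = m div 2"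
  using floor_divide_of_nat_eq[where 'a = real, of m 2] by simp

lemma RW_closed_form: "int (RW m k) = stirling_closed_form (nat \<lceil>real m / 2\<rceil>) m k"
  unfolding nat_ceiling_half
proof (rule closed_form_of_recurrence[where R = "\<lambda>m k. int (RW m k)"])
  show "int (RW (Suc m) (Suc k)) = int (RW m (Suc k))
      + (int m - int k + (int ((Suc m + 1) div 2) - int ((m + 1) div 2))) * int (RW m k)" for m k
    using RW_Suc_Suc[of m k] by (simp add: parity_def; presburger)
qed (simp_all add: RW_0 RW_0_left, presburger)

lemma RK_closed_form: "int (RK m k) = stirling_closed_form (nat \<lfloor>real m / 2\<rfloor>) m k"
  unfolding nat_floor_half
proof (rule closed_form_of_recurrence[where R = "\<lambda>m k. int (RK m k)"])
  show "int (RK (Suc m) (Suc k)) = int (RK m (Suc k))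
      + (int m - int k + (int (Suc m div 2) - int (m div 2))) * int (RK m k)" for m k
    using RK_Suc_Suc[of m k] by (simp add: parity_def; presburger)
qed (simp_all add: RK_0 RK_0_left, presburger)

theorem theorem2p2:
  shows "(\<forall>m k. 1 \<le> m \<longrightarrow> 1 \<le> k \<longrightarrow>
            int (RW m k) = int (RW (m - 1) k)
              + (int m - int k + parity m) * int (RW (m - 1) (k - 1)))
       \<and> (\<forall>m k. 1 \<le> m \<longrightarrow> 1 \<le> k \<longrightarrow>
            int (RK m k) = int (RK (m - 1) k)
              + (int m - int k + 1 - parity m) * int (RK (m - 1) (k - 1)))
       \<and> (\<forall>m. RW m 0 = 1 \<and> RK m 0 = 1)
       \<and> (\<forall>k. RW 0 k = (if k = 0 then 1 else 0) \<and> RK 0 k = (if k = 0 then 1 else 0))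
       \<and> (\<forall>m k. int (RW m k) =
            (\<Sum>j = 0..k. int (nat \<lceil>real m / 2\<rceil> choose j)
                * ext_Stirling (int m - int j) (int m - int k)))
       \<and> (\<forall>m k. int (RK m k) =
            (\<Sum>j = 0..k. int (nat \<lfloor>real m / 2\<rfloor> choose j)
                * ext_Stirling (int m - int j) (int m - int k)))"
proof (intro conjI allI impI)
  fix m k :: nat
  assume "1 \<le> m" "1 \<le> k"
  then obtain m' k' where "m = Suc m'" "k = Suc k'"
    using not0_implies_Suc by fastforce
  then show "int (RW m k) = int (RW (m - 1) k) + (int m - int k + parity m) * int (RW (m - 1) (k - 1))"
    and "int (RK m k) = int (RK (m - 1) k) + (int m - int k + 1 - parity m) * int (RK (m - 1) (k - 1))"
    using RW_Suc_Suc[of m' k'] RK_Suc_Suc[of m' k'] by simp_all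
next
  fix m k :: nat
  show "int (RW m k) = (\<Sum>j = 0..k. int (nat \<lceil>real m / 2\<rceil> choose j)
      * ext_Stirling (int m - int j) (int m - int k))"
    and "int (RK m k) = (\<Sum>j = 0..k. int (nat \<lfloor>real m / 2\<rfloor> choose j)
      * ext_Stirling (int m - int j) (int m - int k))"
    unfolding RW_closed_form RK_closed_form stirling_closed_form_def by (rule refl)+
qed (simp_all add: RW_0 RK_0 RW_0_left RK_0_left)

end
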